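(* Let $g_1,\dots,g_m$ be holomorphic functions of $z=(z_1,z_2)$, where $z_1,z_2$ are complex sub-vectors, satisfying $g_j(\zeta z_1,\zeta^{-1}z_2)=g_j(z_1,z_2)$ for all $\zeta\in\mathbb C\setminus\{0\}$ and all $j$, and let $f=\sum_{j=1}^m|g_j|^2$. Then at every point $z$ the vector $\xi=\begin{pmatrix}z_1\\-z_2\end{pmatrix}$ is orthogonal (w.r.t. $\langle u,v\rangle=u^*v$) to the Wirtinger gradient $\frac{\partial f}{\partial\bar z}$ and lies in the kernel of the mixed Wirtinger Hessian $\frac{\partial^2f}{\partial\bar z\partial z}$. In particular, if $\xi\ne0$, the mixed Hessian is singular.
   Context: Wirtinger derivatives: $\frac{\partial}{\partial z}=\frac12(\frac{\partial}{\partial\mathrm{Re}\,z}-i\frac{\partial}{\partial\mathrm{Im}\,z})$, $\frac{\partial}{\partial\bar z}=\frac12(\frac{\partial}{\partial\mathrm{Re}\,z}+i\frac{\partial}{\partial\mathrm{Im}\,z})$ componentwise; for $f=\sum|g_j|^2$ one has $\frac{\partial f}{\partial\bar z}=\sum_j g_j\overline{g_j'}$ and $\frac{\partial^2 f}{\partial\bar z\partial z}=\sum_j\overline{g_j'}(g_j')^T$. *)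

theory Defs
  imports "HOL-Analysis.Analysis"
begin

definition holomorphic_several :: "(complex^'n \<Rightarrow> complex) \<Rightarrow> bool" where
  "holomorphic_several g \<longleftrightarrow>
     (\<forall>z. \<exists>c::complex^'n. (g has_derivative (\<lambda>h. \<Sum>k\<in>UNIV. c $ k * h $ k)) (at z))"

definition partial_re :: "(complex^'n \<Rightarrow> complex) \<Rightarrow> 'n \<Rightarrow> complex^'n \<Rightarrow> complex" where
  "partial_re f k z = vector_derivative (\<lambda>t::real. f (z + t *\<^sub>R axis k 1)) (at 0)"

definition partial_im :: "(complex^'n \<Rightarrow> complex) \<Rightarrow> 'n \<Rightarrow> complex^'n \<Rightarrow> complex" where
  "partial_im f k z = vector_derivative (\<lambda>t::real. f (z + t *\<^sub>R axis k \<i>)) (at 0)"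

definition wirt_z :: "(complex^'n \<Rightarrow> complex) \<Rightarrow> 'n \<Rightarrow> complex^'n \<Rightarrow> complex" where
  "wirt_z f k z = (partial_re f k z - \<i> * partial_im f k z) / 2"

definition wirt_zbar :: "(complex^'n \<Rightarrow> complex) \<Rightarrow> 'n \<Rightarrow> complex^'n \<Rightarrow> complex" where
  "wirt_zbar f k z = (partial_re f k z + \<i> * partial_im f k z) / 2"

definition wgrad_zbar :: "(complex^'n \<Rightarrow> complex) \<Rightarrow> complex^'n \<Rightarrow> complex^'n" where
  "wgrad_zbar f z = (\<chi> k. wirt_zbar f k z)"

definition mixed_hessian :: "(complex^'n \<Rightarrow> complex) \<Rightarrow> complex^'n \<Rightarrow> complex^'n^'n" where
  "mixed_hessian f z = (\<chi> k l. wirt_zbar (\<lambda>w. wirt_z f l w) k z)"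

definition herm_inner :: "complex^'n \<Rightarrow> complex^'n \<Rightarrow> complex" where
  "herm_inner u v = (\<Sum>k\<in>UNIV. cnj (u $ k) * v $ k)"

text \<open>The coordinates in A form z_1, the remaining ones form z_2.
  Action zeta.(z1,z2) = (zeta z1, zeta^-1 z2) and the vector xi = (z1, -z2).\<close>
definition torus_act :: "'n set \<Rightarrow> complex \<Rightarrow> complex^'n \<Rightarrow> complex^'n" where
  "torus_act A \<zeta> z = (\<chi> k. if k \<in> A then \<zeta> * z $ k else z $ k / \<zeta>)"

definition xi_vec :: "'n set \<Rightarrow> complex^'n \<Rightarrow> complex^'n" where
  "xi_vec A z = (\<chi> k. if k \<in> A then z $ k else - z $ k)"

end

theory Submission
  imports Defs "HOL-Complex_Analysis.Cauchy_Integral_Formula"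
begin

text \<open>Differentiating the invariance of each g_j under the torus action at zeta = 1 gives
  the Euler identity sum_k (d g_j / d z_k)(z) xi_k = 0. Since the Wirtinger gradient of f is
  sum_j g_j conj(grad g_j) and its mixed Hessian is sum_j conj(grad g_j) (grad g_j)^T, both
  pairings with xi are combinations of these vanishing sums. The analytic input is that a
  complex partial derivative of a holomorphic function is again holomorphic along every
  coordinate line, which follows from the Cauchy formula for the derivative and
  differentiation under the integral sign.\<close>

lemma axis_zero [simp]: "axis k 0 = (0::'a::zero^'n)"
  by (simp add: vec_eq_iff axis_def)

lemma bounded_linear_axis: "bounded_linear (axis i :: 'a::real_normed_vector \<Rightarrow> 'a^'n)"
proof (rule bounded_linear_intro[where K=1])
  fix x y :: 'a and r :: real
  show "axis i (x + y) = (axis i x + axis i y :: 'a^'n)" by (simp add: vec_eq_iff axis_def)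
  show "axis i (r *\<^sub>R x) = (r *\<^sub>R axis i x :: 'a^'n)" by (simp add: vec_eq_iff axis_def)
  have "norm (axis i x :: 'a^'n) = norm x"
    by (simp add: norm_vec_def L2_set_def axis_def if_distrib[of "\<lambda>y. y ^ 2"] if_distrib[of norm]
        cong: if_cong)
  then show "norm (axis i x :: 'a^'n) \<le> norm x * 1" by simp
qed

lemma vec_eq_sum_axis: "(x :: 'a::real_normed_vector^'n) = (\<Sum>i\<in>UNIV. axis i (x $ i))"
  by (simp add: vec_eq_iff axis_def sum_component if_distrib cong: if_cong)

lemma has_derivative_vec_nthI:
  assumes "\<And>i. ((\<lambda>x. f x $ i) has_derivative (\<lambda>h. f' h $ i)) F"
  shows "((f :: _ \<Rightarrow> 'a::real_normed_vector^'n) has_derivative f') F"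
proof -
  have "((\<lambda>x. \<Sum>i\<in>UNIV. axis i (f x $ i)) has_derivative (\<lambda>h. \<Sum>i\<in>UNIV. axis i (f' h $ i))) F"
    by (intro has_derivative_sum bounded_linear.has_derivative[OF bounded_linear_axis] assms)
  then show ?thesis by (subst (asm) (1 2) vec_eq_sum_axis[symmetric])
qed

lemma has_field_derivative_comp_curve:
  fixes g :: "complex^'n \<Rightarrow> complex" and \<gamma> :: "complex \<Rightarrow> complex^'n"
  assumes g: "(g has_derivative (\<lambda>h. \<Sum>k\<in>UNIV. c k * h $ k)) (at (\<gamma> x))"
    and \<gamma>: "\<And>i. ((\<lambda>s. \<gamma> s $ i) has_field_derivative d i) (at x)"
  shows "((\<lambda>s. g (\<gamma> s)) has_field_derivative (\<Sum>k\<in>UNIV. c k * d k)) (at x)"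
proof -
  have "(\<gamma> has_derivative (\<lambda>h. \<chi> i. d i * h)) (at x)"
    by (rule has_derivative_vec_nthI) (use \<gamma> in \<open>simp add: has_field_derivative_def\<close>)
  from diff_chain_at[OF this g]
  have "((\<lambda>s. g (\<gamma> s)) has_derivative (\<lambda>h. \<Sum>k\<in>UNIV. c k * (d k * h))) (at x)"
    by (simp add: o_def)
  moreover have "(\<lambda>h. \<Sum>k\<in>UNIV. c k * (d k * h)) = (*) (\<Sum>k\<in>UNIV. c k * d k)"
    by (simp add: fun_eq_iff sum_distrib_left mult_ac)
  ultimately show ?thesis by (simp add: has_field_derivative_def)
qed

definition cpartial :: "(complex^'n \<Rightarrow> complex) \<Rightarrow> 'n \<Rightarrow> complex^'n \<Rightarrow> complex" where
  "cpartial g k w = deriv (\<lambda>s. g (w + axis k s)) 0"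

lemma has_field_derivative_axis_line:
  "((\<lambda>s. (w + axis k s) $ i) has_field_derivative (if i = k then 1 else 0)) (at x)"
  by (auto simp: axis_def intro!: derivative_eq_intros)

lemma holomorphic_several_has_derivative:
  assumes "holomorphic_several g"
  shows "(g has_derivative (\<lambda>h. \<Sum>k\<in>UNIV. cpartial g k w * h $ k)) (at w)"
proof -
  obtain c where c: "(g has_derivative (\<lambda>h. \<Sum>k\<in>UNIV. c $ k * h $ k)) (at w)"
    using assms unfolding holomorphic_several_def by blast
  have "c $ k = cpartial g k w" for k
  proof -
    have "((\<lambda>s. g (w + axis k s)) has_field_derivative
        (\<Sum>i\<in>UNIV. c $ i * (if i = k then 1 else 0))) (at 0)"
      using has_field_derivative_comp_curve[where \<gamma>="\<lambda>s. w + axis k s" and x=0,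
          OF _ has_field_derivative_axis_line] c
      by simp
    then show ?thesis
      unfolding cpartial_def by (simp add: DERIV_imp_deriv if_distrib cong: if_cong)
  qed
  then show ?thesis using c by simp
qed

lemma holomorphic_several_line_derivative:
  assumes "holomorphic_several g"
  shows "((\<lambda>s. g (w + axis k s)) has_field_derivative cpartial g k (w + axis k s0)) (at s0)"
  using has_field_derivative_comp_curve[where \<gamma>="\<lambda>s. w + axis k s" and x=s0,
      OF holomorphic_several_has_derivative[OF assms] has_field_derivative_axis_line]
  by (simp add: if_distrib cong: if_cong)

lemma holomorphic_several_continuous_on: "holomorphic_several g \<Longrightarrow> continuous_on UNIV g"
  by (rule continuous_at_imp_continuous_on)
     (blast intro: has_derivative_continuous holomorphic_several_has_derivative)

lemma deriv_eq_circle_integral: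
  assumes "F holomorphic_on UNIV"
  defines "E \<equiv> \<lambda>t::real. exp (2 * of_real pi * \<i> * of_real t)"
  shows "deriv F w = integral {0..1} (\<lambda>t. F (w + E t) / E t)"
proof -
  have "(F has_field_derivative (1 / (2 * of_real pi * \<i>)
      * contour_integral (circlepath w 1) (\<lambda>u. F u / (u - w)^2))) (at w)"
    by (rule Cauchy_derivative_integral_circlepath(2))
       (use assms in \<open>auto intro: holomorphic_on_imp_continuous_on holomorphic_on_subset\<close>)
  then have "deriv F w
      = 1 / (2 * of_real pi * \<i>) * contour_integral (circlepath w 1) (\<lambda>u. F u / (u - w)^2)"
    by (rule DERIV_imp_deriv)
  also have "contour_integral (circlepath w 1) (\<lambda>u. F u / (u - w)^2)
      = integral {0..1} (\<lambda>t. F (w + E t) / (E t)^2 * (2 * of_real pi * \<i> * E t))"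
    unfolding contour_integral_integral vector_derivative_circlepath by (simp add: circlepath E_def)
  also have "\<dots> = integral {0..1} (\<lambda>t. (2 * of_real pi * \<i>) * (F (w + E t) / E t))"
    by (rule integral_cong) (simp add: E_def field_simps power2_eq_square)
  also have "\<dots> = (2 * of_real pi * \<i>) * integral {0..1} (\<lambda>t. F (w + E t) / E t)"
    by (rule integral_mult_right)
  finally show ?thesis by simp
qed

text \<open>The derivative in \<open>u\<close> is a circle integral of \<open>G\<close>, hence holomorphic in \<open>s\<close> by the
  Leibniz rule; the continuity that rule requires of \<open>\<partial>G/\<partial>s\<close> comes from writing \<open>\<partial>G/\<partial>s\<close> as
  a circle integral too.\<close>

lemma holomorphic_on_deriv_parametric:
  fixes G :: "complex \<Rightarrow> complex \<Rightarrow> complex"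
  assumes cont: "continuous_on UNIV (\<lambda>p. G (fst p) (snd p))"
    and hol1: "\<And>u. (\<lambda>s. G s u) holomorphic_on UNIV"
    and hol2: "\<And>s. (\<lambda>u. G s u) holomorphic_on UNIV"
  shows "(\<lambda>s. deriv (\<lambda>u. G s u) 0) holomorphic_on UNIV"
proof -
  define E where "E = (\<lambda>t::real. exp (2 * of_real pi * \<i> * of_real t))"
  have E_nonzero: "E t \<noteq> 0" for t by (simp add: E_def)
  have contE: "continuous_on S (\<lambda>x. E (h x))" if "continuous_on S h"
    for S and h :: "'z::topological_space \<Rightarrow> real"
    using that by (auto simp: E_def intro!: continuous_intros)
  have contG: "continuous_on S (\<lambda>x. G (a x) (b x))" if "continuous_on S a" "continuous_on S b"
    for S and a b :: "'z::topological_space \<Rightarrow> complex"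
    using continuous_on_compose2[OF cont, of S "\<lambda>x. (a x, b x)"] that
    by (auto intro!: continuous_intros)
  define D where
    "D = (\<lambda>p::complex \<times> complex. integral (cbox 0 1) (\<lambda>t::real. G (fst p + E t) (snd p) / E t))"
  have deriv_eq_D: "deriv (\<lambda>s. G s u) s = D (s, u)" for s u
    using deriv_eq_circle_integral[OF hol1[of u], of s] by (simp add: D_def E_def)
  have contD: "continuous_on UNIV D"
    unfolding D_def
    by (rule integral_continuous_on_param)
       (auto simp: split_beta E_nonzero intro!: continuous_intros contG contE)
  have "(\<lambda>s. integral (cbox 0 1) (\<lambda>t. G s (E t) / E t)) holomorphic_on UNIV"
  proof (rule leibniz_rule_holomorphic[where fx="\<lambda>s t. D (s, E t) / E t"])
    fix s :: complex and t :: real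
    have "((\<lambda>s. G s (E t)) has_field_derivative deriv (\<lambda>s. G s (E t)) s) (at s)"
      using hol1 by (auto intro!: holomorphic_derivI)
    then show "((\<lambda>s. G s (E t) / E t) has_field_derivative D (s, E t) / E t) (at s within UNIV)"
      unfolding deriv_eq_D by (auto simp: E_nonzero intro!: derivative_eq_intros)
  next
    fix s :: complex
    show "(\<lambda>t. G s (E t) / E t) integrable_on cbox 0 1"
      by (rule integrable_continuous) (auto simp: E_nonzero intro!: continuous_intros contG contE)
  next
    have "continuous_on (UNIV \<times> cbox 0 1) (\<lambda>x::complex \<times> real. D (fst x, E (snd x)))"
      by (rule continuous_on_compose2[OF contD]) (auto intro!: continuous_intros contE)
    then show "continuous_on (UNIV \<times> cbox 0 1) (\<lambda>(s, t). D (s, E t) / E t)"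
      by (auto simp: split_beta E_nonzero intro!: continuous_intros contE)
  qed auto
  moreover have "deriv (\<lambda>u. G s u) 0 = integral (cbox 0 1) (\<lambda>t. G s (E t) / E t)" for s
    using deriv_eq_circle_integral[OF hol2[of s], of 0] by (simp add: E_def)
  ultimately show ?thesis by simp
qed

lemma holomorphic_on_cpartial_line:
  assumes hol: "holomorphic_several g"
  shows "(\<lambda>s. cpartial g l (z + axis k s)) holomorphic_on UNIV"
proof -
  define G where "G = (\<lambda>s u. g (z + axis k s + axis l u))"
  have "continuous_on UNIV (\<lambda>p::complex \<times> complex. z + axis k (fst p) + axis l (snd p))"
    by (intro continuous_intros linear_continuous_on bounded_linear_compose[OF bounded_linear_axis]
        bounded_linear_fst bounded_linear_snd)
  then have "continuous_on UNIV (\<lambda>p. G (fst p) (snd p))"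
    unfolding G_def using continuous_on_compose2[OF holomorphic_several_continuous_on[OF hol]]
    by blast
  moreover have "(\<lambda>s. G s u) holomorphic_on UNIV" for u
  proof -
    have "(\<lambda>s. G s u) = (\<lambda>s. g ((z + axis l u) + axis k s))"
      by (simp add: G_def add_ac)
    then show ?thesis using holomorphic_several_line_derivative[OF hol]
      by (auto simp: holomorphic_on_def field_differentiable_def)
  qed
  moreover have "(\<lambda>u. G s u) holomorphic_on UNIV" for s
    unfolding G_def using holomorphic_several_line_derivative[OF hol]
    by (auto simp: holomorphic_on_def field_differentiable_def)
  ultimately show ?thesis
    using holomorphic_on_deriv_parametric by (simp add: G_def cpartial_def)
qed

lemma has_vector_derivative_real_directions:
  assumes "((\<lambda>s. F (w + axis k s)) has_field_derivative D) (at 0)"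
  shows "((\<lambda>t::real. F (w + t *\<^sub>R axis k 1)) has_vector_derivative D) (at 0)"
    and "((\<lambda>t::real. F (w + t *\<^sub>R axis k \<i>)) has_vector_derivative (\<i> * D)) (at 0)"
proof -
  have re: "t *\<^sub>R axis k 1 = axis k (complex_of_real t)" for t
    by (simp add: vec_eq_iff axis_def of_real_def)
  have im: "t *\<^sub>R axis k \<i> = axis k (complex_of_real t * \<i>)" for t
    by (simp add: vec_eq_iff axis_def; simp add: scaleR_conv_of_real)
  have "(complex_of_real has_vector_derivative 1) (at (0::real))"
    by (auto intro!: derivative_eq_intros)
  from field_vector_diff_chain_at[OF this, of "\<lambda>s. F (w + axis k s)" D]
  show "((\<lambda>t::real. F (w + t *\<^sub>R axis k 1)) has_vector_derivative D) (at 0)"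
    using assms by (simp add: re o_def)
  have "((\<lambda>t::real. complex_of_real t * \<i>) has_vector_derivative \<i>) (at (0::real))"
    by (auto intro!: derivative_eq_intros)
  from field_vector_diff_chain_at[OF this, of "\<lambda>s. F (w + axis k s)" D]
  show "((\<lambda>t::real. F (w + t *\<^sub>R axis k \<i>)) has_vector_derivative (\<i> * D)) (at 0)"
    using assms by (simp add: im o_def)
qed

lemma wirt_sum_cnj_mult:
  assumes J: "finite J"
    and a: "\<And>j. j \<in> J \<Longrightarrow> ((\<lambda>s. a j (w + axis k s)) has_field_derivative A j) (at 0)"
    and b: "\<And>j. j \<in> J \<Longrightarrow> ((\<lambda>s. b j (w + axis k s)) has_field_derivative B j) (at 0)"
  shows "wirt_z (\<lambda>v. \<Sum>j\<in>J. cnj (a j v) * b j v) k w = (\<Sum>j\<in>J. cnj (a j w) * B j)"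
    and "wirt_zbar (\<lambda>v. \<Sum>j\<in>J. cnj (a j v) * b j v) k w = (\<Sum>j\<in>J. cnj (A j) * b j w)"
proof -
  let ?F = "\<lambda>v. \<Sum>j\<in>J. cnj (a j v) * b j v"
  have "((\<lambda>t::real. ?F (w + t *\<^sub>R axis k 1)) has_vector_derivative
      (\<Sum>j\<in>J. cnj (a j (w + 0 *\<^sub>R axis k 1)) * B j + cnj (A j) * b j (w + 0 *\<^sub>R axis k 1))) (at 0)"
    by (intro has_vector_derivative_sum has_vector_derivative_mult has_vector_derivative_cnj
        has_vector_derivative_real_directions(1) a b)
  then have re: "partial_re ?F k w = (\<Sum>j\<in>J. cnj (a j w) * B j + cnj (A j) * b j w)"
    unfolding partial_re_def by (simp add: vector_derivative_at)
  have "((\<lambda>t::real. ?F (w + t *\<^sub>R axis k \<i>)) has_vector_derivative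
      (\<Sum>j\<in>J. cnj (a j (w + 0 *\<^sub>R axis k \<i>)) * (\<i> * B j)
        + cnj (\<i> * A j) * b j (w + 0 *\<^sub>R axis k \<i>))) (at 0)"
    by (intro has_vector_derivative_sum has_vector_derivative_mult has_vector_derivative_cnj
        has_vector_derivative_real_directions(2) a b)
  then have im: "partial_im ?F k w = (\<Sum>j\<in>J. cnj (a j w) * (\<i> * B j) + cnj (\<i> * A j) * b j w)"
    unfolding partial_im_def by (simp add: vector_derivative_at)
  show "wirt_z ?F k w = (\<Sum>j\<in>J. cnj (a j w) * B j)"
    unfolding wirt_z_def re im sum_distrib_left sum_subtractf[symmetric] sum_divide_distrib
    by (rule sum.cong) (simp_all add: algebra_simps)
  show "wirt_zbar ?F k w = (\<Sum>j\<in>J. cnj (A j) * b j w)"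
    unfolding wirt_zbar_def re im sum_distrib_left sum.distrib[symmetric] sum_divide_distrib
    by (rule sum.cong) (simp_all add: algebra_simps)
qed

lemma sum_sq_norm_eq_sum_cnj_mult:
  "(\<lambda>w. complex_of_real (\<Sum>j\<in>J. (cmod (g j w))\<^sup>2)) = (\<lambda>w. \<Sum>j\<in>J. cnj (g j w) * g j w)"
  unfolding of_real_sum complex_norm_square by (simp add: mult.commute)

lemma has_field_derivative_cpartial:
  "holomorphic_several g \<Longrightarrow> ((\<lambda>s. g (w + axis k s)) has_field_derivative cpartial g k w) (at 0)"
  using holomorphic_several_line_derivative[of g w k 0] by simp

context
  fixes g :: "'j \<Rightarrow> complex^'n \<Rightarrow> complex" and J :: "'j set"
  assumes finite: "finite J" and hol: "\<And>j. j \<in> J \<Longrightarrow> holomorphic_several (g j)"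
begin

lemma wirt_z_sum_sq_norm:
  "wirt_z (\<lambda>w. complex_of_real (\<Sum>j\<in>J. (cmod (g j w))\<^sup>2)) l w
     = (\<Sum>j\<in>J. cnj (g j w) * cpartial (g j) l w)"
  unfolding sum_sq_norm_eq_sum_cnj_mult
  by (rule wirt_sum_cnj_mult(1)) (auto intro: finite has_field_derivative_cpartial hol)

lemma wirt_zbar_sum_sq_norm:
  "wirt_zbar (\<lambda>w. complex_of_real (\<Sum>j\<in>J. (cmod (g j w))\<^sup>2)) k w
     = (\<Sum>j\<in>J. cnj (cpartial (g j) k w) * g j w)"
  unfolding sum_sq_norm_eq_sum_cnj_mult
  by (rule wirt_sum_cnj_mult(2)) (auto intro: finite has_field_derivative_cpartial hol)

lemma mixed_hessian_sum_sq_norm: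
  "mixed_hessian (\<lambda>w. complex_of_real (\<Sum>j\<in>J. (cmod (g j w))\<^sup>2)) z $ k $ l
     = (\<Sum>j\<in>J. cnj (cpartial (g j) k z) * cpartial (g j) l z)"
proof -
  have cpartial_line: "((\<lambda>s. cpartial (g j) l (z + axis k s)) has_field_derivative
      deriv (\<lambda>s. cpartial (g j) l (z + axis k s)) 0) (at 0)" if "j \<in> J" for j
    using holomorphic_on_cpartial_line[OF hol[OF that], of l z k]
    by (auto simp: DERIV_deriv_iff_field_differentiable
        intro: holomorphic_on_imp_differentiable_at)
  show ?thesis
    unfolding mixed_hessian_def wirt_z_sum_sq_norm vec_lambda_beta
    by (rule wirt_sum_cnj_mult(2))
       (auto intro: finite has_field_derivative_cpartial hol cpartial_line)
qed

end

lemma torus_invariant_euler_identity: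
  assumes hol: "holomorphic_several g"
    and inv: "\<And>\<zeta> w. \<zeta> \<noteq> 0 \<Longrightarrow> g (torus_act A \<zeta> w) = g w"
  shows "(\<Sum>k\<in>UNIV. cpartial g k w * xi_vec A w $ k) = 0"
proof -
  have "((\<lambda>\<zeta>. torus_act A \<zeta> w $ i) has_field_derivative xi_vec A w $ i) (at 1)" for i
    unfolding torus_act_def xi_vec_def
    by (auto intro!: derivative_eq_intros simp: power2_eq_square)
  moreover have "torus_act A 1 w = w"
    by (simp add: torus_act_def vec_eq_iff)
  ultimately have "((\<lambda>\<zeta>. g (torus_act A \<zeta> w)) has_field_derivative
      (\<Sum>k\<in>UNIV. cpartial g k w * xi_vec A w $ k)) (at 1)"
    using has_field_derivative_comp_curve[OF holomorphic_several_has_derivative[OF hol]] by metis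
  then have "((\<lambda>\<zeta>. g w) has_field_derivative (\<Sum>k\<in>UNIV. cpartial g k w * xi_vec A w $ k)) (at 1)"
    by (rule has_field_derivative_transform_within_open[where S="-{0}"]) (auto simp: inv)
  then show ?thesis
    using DERIV_const DERIV_unique by blast
qed

theorem lemma7:
  fixes g :: "nat \<Rightarrow> complex^'n \<Rightarrow> complex" and m :: nat and A :: "'n set"
    and f :: "complex^'n \<Rightarrow> real" and z :: "complex^'n"
  assumes holo: "\<And>j. j \<in> {1..m} \<Longrightarrow> holomorphic_several (g j)"
    and inv: "\<And>j \<zeta> w. j \<in> {1..m} \<Longrightarrow> \<zeta> \<noteq> 0 \<Longrightarrow> g j (torus_act A \<zeta> w) = g j w"
    and f_def: "f = (\<lambda>w. \<Sum>j=1..m. (cmod (g j w))\<^sup>2)"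
  shows "herm_inner (xi_vec A z) (wgrad_zbar (\<lambda>w. complex_of_real (f w)) z) = 0
     \<and> mixed_hessian (\<lambda>w. complex_of_real (f w)) z *v xi_vec A z = 0
     \<and> (xi_vec A z \<noteq> 0 \<longrightarrow> det (mixed_hessian (\<lambda>w. complex_of_real (f w)) z) = 0)"
proof -
  let ?\<xi> = "xi_vec A z" and ?H = "mixed_hessian (\<lambda>w. complex_of_real (f w)) z"
  have euler: "(\<Sum>k\<in>UNIV. cpartial (g j) k z * ?\<xi> $ k) = 0" if "j \<in> {1..m}" for j
    using torus_invariant_euler_identity[OF holo[OF that] inv[OF that]] .
  have grad: "wirt_zbar (\<lambda>w. complex_of_real (f w)) k z
      = (\<Sum>j=1..m. cnj (cpartial (g j) k z) * g j z)" for k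
    unfolding f_def by (rule wirt_zbar_sum_sq_norm[OF finite_atLeastAtMost holo])
  have hessian: "?H $ k $ l = (\<Sum>j=1..m. cnj (cpartial (g j) k z) * cpartial (g j) l z)" for k l
    unfolding f_def by (rule mixed_hessian_sum_sq_norm[OF finite_atLeastAtMost holo])
  have "herm_inner ?\<xi> (wgrad_zbar (\<lambda>w. complex_of_real (f w)) z)
      = (\<Sum>j=1..m. g j z * cnj (\<Sum>k\<in>UNIV. cpartial (g j) k z * ?\<xi> $ k))"
    unfolding herm_inner_def wgrad_zbar_def grad
    by (simp add: sum_distrib_left mult_ac sum.swap[of _ UNIV])
  moreover have "(?H *v ?\<xi>) $ k
      = (\<Sum>j=1..m. cnj (cpartial (g j) k z) * (\<Sum>l\<in>UNIV. cpartial (g j) l z * ?\<xi> $ l))" for k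
    unfolding matrix_vector_mult_def hessian
    by (simp add: sum_distrib_left sum_distrib_right mult_ac sum.swap[of _ UNIV])
  ultimately have "herm_inner ?\<xi> (wgrad_zbar (\<lambda>w. complex_of_real (f w)) z) = 0"
    and kernel: "?H *v ?\<xi> = 0"
    by (simp_all add: euler vec_eq_iff)
  moreover have "det ?H = 0" if "?\<xi> \<noteq> 0"
    using kernel that invertible_det_nz invertible_left_inverse matrix_left_invertible_ker by blast
  ultimately show ?thesis by blast
qed

end
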